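(* Let $r\geq 3$ and let $D$ be an $m$-colored semicomplete $r$-partite digraph, and let $x,y$ be distinct vertices of $D$. Suppose there exists a directed path from $x$ to $y$ in $D$ that uses exactly $k$ colors for some $k\geq 4$, and suppose there is no directed path from $y$ to $x$ in $D$ using at most $4$ colors. Then $d(x,y)\leq 2$.
   Context: A semicomplete $r$-partite digraph ($r\ge 2$) is a digraph whose vertex set is partitioned into $r$ nonempty independent sets (partite sets) such that for any two vertices $u,v$ in different partite sets at least one of the arcs $(u,v)$, $(v,u)$ is present (both may be present); there are no arcs inside a partite set. An $m$-colored digraph is a digraph whose arcs are each assigned one of $m$ colors. A directed path (no repeated vertices) is $j$-colored if its arcs use exactly $j$ distinct colors; it uses at most $k$ colors if it is $j$-colored for some $1\le j\le k$. $d(x,y)$ denotes the minimum number of arcs of a directed path from $x$ to $y$. *)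

theory Defs
  imports Main
begin

definition semicomplete_multipartite ::
  "'a set \<Rightarrow> ('a \<times> 'a) set \<Rightarrow> 'a set set \<Rightarrow> nat \<Rightarrow> bool" where
  "semicomplete_multipartite V A P r \<longleftrightarrow>
     finite V \<and> A \<subseteq> V \<times> V \<and>
     finite P \<and> card P = r \<and> \<Union>P = V \<and> {} \<notin> P \<and>
     (\<forall>X\<in>P. \<forall>Y\<in>P. X \<noteq> Y \<longrightarrow> X \<inter> Y = {}) \<and>
     (\<forall>X\<in>P. \<forall>u\<in>X. \<forall>v\<in>X. (u, v) \<notin> A) \<and>
     (\<forall>X\<in>P. \<forall>Y\<in>P. X \<noteq> Y \<longrightarrow> (\<forall>u\<in>X. \<forall>v\<in>Y. (u, v) \<in> A \<or> (v, u) \<in> A))"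

definition dpath :: "('a \<times> 'a) set \<Rightarrow> 'a list \<Rightarrow> bool" where
  "dpath A xs \<longleftrightarrow> xs \<noteq> [] \<and> distinct xs \<and>
     (\<forall>i. Suc i < length xs \<longrightarrow> (xs ! i, xs ! Suc i) \<in> A)"

definition dpath_from_to :: "('a \<times> 'a) set \<Rightarrow> 'a \<Rightarrow> 'a \<Rightarrow> 'a list \<Rightarrow> bool" where
  "dpath_from_to A x y xs \<longleftrightarrow> dpath A xs \<and> hd xs = x \<and> last xs = y"

definition path_colors :: "('a \<Rightarrow> 'a \<Rightarrow> 'c) \<Rightarrow> 'a list \<Rightarrow> 'c set" where
  "path_colors col xs = {col (xs ! i) (xs ! Suc i) | i. Suc i < length xs}"

definition ddist :: "('a \<times> 'a) set \<Rightarrow> 'a \<Rightarrow> 'a \<Rightarrow> nat" where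
  "ddist A x y = (LEAST n. \<exists>xs. dpath_from_to A x y xs \<and> length xs = Suc n)"

end

theory Submission
  imports Defs
begin

(*
  Let xs be a shortest directed path from x to y and suppose it has at
  least three arcs.  A shortest path has no forward chord (an arc from a vertex to a
  later, non-consecutive one), since such a chord would shorten it.  In a
  semicomplete multipartite digraph any two path vertices that are at least two
  steps apart and lie in different partite sets are therefore joined by a BACKWARD
  arc.  A short case analysis on the partite sets of x, y and the first interior
  vertices then produces a directed path from y back to x with at most four arcs:
  the arc y -> x itself, the path y, v1, ..., v(n-1), x when n <= 4, or a detour
  y -> w -> x through one of v2, v3 when n >= 5.  Any path with between one and
  four arcs uses between one and four colours, which the hypothesis forbids; hence
  d(x,y) <= 2.  The colouring, the bound r >= 3 and the k-coloured x-y path beyond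
  its mere existence play no further role.
*)

lemma dpath_iff_successively:
  "dpath A xs \<longleftrightarrow> xs \<noteq> [] \<and> distinct xs \<and> successively (\<lambda>u v. (u, v) \<in> A) xs"
  by (simp add: dpath_def successively_conv_nth)

(* A path with l >= 2 vertices uses at least one and at most l - 1 colours,
   since its colour set is the image of its l - 1 arcs. *)
lemma card_path_colors_bounds:
  assumes "2 \<le> length xs"
  shows "1 \<le> card (path_colors col xs)" and "card (path_colors col xs) \<le> length xs - 1"
proof -
  have colors: "path_colors col xs = (\<lambda>i. col (xs ! i) (xs ! Suc i)) ` {..<length xs - 1}"
    unfolding path_colors_def by auto
  have "path_colors col xs \<noteq> {}"
    unfolding colors using assms by (simp add: lessThan_empty_iff)
  then show "1 \<le> card (path_colors col xs)"
    unfolding colors by (simp add: Suc_leI card_gt_0_iff)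
  show "card (path_colors col xs) \<le> length xs - 1"
    unfolding colors using card_image_le[of "{..<length xs - 1}"] by simp
qed

lemma dpath_shortcut:
  assumes p: "dpath_from_to A x y xs" and ij: "Suc i < j" "j < length xs"
    and chord: "(xs ! i, xs ! j) \<in> A"
  shows "dpath_from_to A x y (take (Suc i) xs @ drop j xs)"
proof -
  let ?E = "\<lambda>u v. (u, v) \<in> A"
  have xs: "xs \<noteq> []" "distinct xs" "successively ?E xs" "hd xs = x" "last xs = y"
    using p by (auto simp: dpath_from_to_def dpath_iff_successively)
  have pieces: "successively ?E (take n xs) \<and> successively ?E (drop n xs)" for n
    using xs(3) successively_append_iff[of ?E "take n xs" "drop n xs"] by simp
  have "set (take (Suc i) xs) \<inter> set (drop j xs) = {}"
  proof -
    have "set (take j xs) \<inter> set (drop j xs) = {}"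
      using xs(2) distinct_append[of "take j xs" "drop j xs"] by simp
    moreover have "set (take (Suc i) xs) \<subseteq> set (take j xs)"
      using ij by (simp add: set_take_subset_set_take)
    ultimately show ?thesis by blast
  qed
  moreover have "last (take (Suc i) xs) = xs ! i"
    using ij by (subst last_conv_nth) auto
  ultimately show ?thesis
    using xs pieces[of "Suc i"] pieces[of j] ij chord
    by (auto simp: dpath_from_to_def dpath_iff_successively successively_append_iff
        hd_drop_conv_nth)
qed

definition chordless :: "('a \<times> 'a) set \<Rightarrow> 'a list \<Rightarrow> bool" where
  "chordless A xs \<longleftrightarrow> (\<forall>i j. Suc i < j \<and> j < length xs \<longrightarrow> (xs ! i, xs ! j) \<notin> A)"

(* If x reaches y at all, some path of length d(x,y) realises the distance,
   and by dpath_shortcut such a shortest path is chordless. *)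
lemma shortest_dpath:
  assumes "dpath_from_to A x y xs0"
  obtains xs where "dpath_from_to A x y xs" "length xs = Suc (ddist A x y)" "chordless A xs"
proof -
  have length_Suc: "dpath_from_to A x y zs \<Longrightarrow> length zs = Suc (length zs - 1)" for zs
    by (cases zs) (auto simp: dpath_from_to_def dpath_def)
  have "\<exists>zs. dpath_from_to A x y zs \<and> length zs = Suc (ddist A x y)"
    unfolding ddist_def by (rule LeastI_ex) (use assms length_Suc in blast)
  then obtain xs where xs: "dpath_from_to A x y xs" "length xs = Suc (ddist A x y)"
    by blast
  have minimal: "length xs \<le> length zs" if zs: "dpath_from_to A x y zs" for zs
  proof -
    have "ddist A x y \<le> length zs - 1"
      unfolding ddist_def by (rule Least_le) (use zs length_Suc[OF zs] in blast)
    then show ?thesis using xs(2) length_Suc[OF zs] by linarith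
  qed
  have "chordless A xs"
    unfolding chordless_def
  proof (intro allI impI notI)
    fix i j assume ij: "Suc i < j \<and> j < length xs" and "(xs ! i, xs ! j) \<in> A"
    then have "dpath_from_to A x y (take (Suc i) xs @ drop j xs)"
      using dpath_shortcut[OF xs(1)] by blast
    then have "length xs \<le> length (take (Suc i) xs @ drop j xs)"
      by (rule minimal)
    with ij show False by (simp, linarith)
  qed
  with xs show thesis by (rule that)
qed

definition same_part :: "'a set set \<Rightarrow> 'a \<Rightarrow> 'a \<Rightarrow> bool" where
  "same_part P u v \<longleftrightarrow> (\<exists>X\<in>P. u \<in> X \<and> v \<in> X)"

lemma same_part_sym: "same_part P u v \<Longrightarrow> same_part P v u"
  unfolding same_part_def by blast

(* Every vertex of a path with at least one arc is an endpoint of an arc,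
   hence lies in V when all arcs do. *)
lemma dpath_set_subset:
  assumes "A \<subseteq> V \<times> V" "dpath A xs" "2 \<le> length xs"
  shows "set xs \<subseteq> V"
proof
  fix v assume "v \<in> set xs"
  then obtain i where i: "i < length xs" "v = xs ! i"
    by (auto simp: in_set_conv_nth)
  have arcs: "Suc k < length xs \<Longrightarrow> (xs ! k, xs ! Suc k) \<in> A" for k
    using assms(2) by (simp add: dpath_def)
  show "v \<in> V"
  proof (cases "Suc i < length xs")
    case True
    then show ?thesis using arcs[of i] assms(1) i by blast
  next
    case False
    then have "Suc (i - 1) < length xs" "Suc (i - 1) = i" using i assms(3) by auto
    then show ?thesis using arcs[of "i - 1"] assms(1) i by force
  qed
qed

lemma dpath_from_to_ends:
  assumes "dpath_from_to A x y xs" "2 \<le> length xs"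
  shows "\<exists>m. xs = x # m @ [y]"
proof (cases xs)
  case (Cons a rest)
  then have "rest \<noteq> []" using assms(2) by auto
  then have "rest = butlast rest @ [last rest]" by simp
  then show ?thesis
    using assms(1) Cons \<open>rest \<noteq> []\<close>
    by (auto simp: dpath_from_to_def intro!: exI[of _ "butlast rest"])
qed (use assms in simp)

lemma dpath_swap_ends:
  assumes "dpath A (x # m @ [y])" "m \<noteq> []" "(y, hd m) \<in> A" "(last m, x) \<in> A"
  shows "dpath A (y # m @ [x])"
  using assms by (auto simp: dpath_iff_successively successively_append_iff successively_Cons)

context
  fixes V :: "'a set" and A :: "('a \<times> 'a) set" and P :: "'a set set" and r :: nat
  assumes smd: "semicomplete_multipartite V A P r"
begin

lemma smd_parts:
  shows smd_arcs_in_V: "A \<subseteq> V \<times> V"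
    and smd_union: "\<Union>P = V"
    and smd_disjoint: "\<And>X Y. X \<in> P \<Longrightarrow> Y \<in> P \<Longrightarrow> X \<noteq> Y \<Longrightarrow> X \<inter> Y = {}"
    and smd_independent: "\<And>X u v. X \<in> P \<Longrightarrow> u \<in> X \<Longrightarrow> v \<in> X \<Longrightarrow> (u, v) \<notin> A"
    and smd_semicomplete: "\<And>X Y u v. X \<in> P \<Longrightarrow> Y \<in> P \<Longrightarrow> X \<noteq> Y \<Longrightarrow> u \<in> X \<Longrightarrow> v \<in> Y
      \<Longrightarrow> (u, v) \<in> A \<or> (v, u) \<in> A"
  using smd by (simp_all add: semicomplete_multipartite_def)

(* Since the partite sets are pairwise disjoint, lying in a common part is
   transitive. *)
lemma smd_same_part_trans: "same_part P u v \<Longrightarrow> same_part P v w \<Longrightarrow> same_part P u w"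
  unfolding same_part_def using smd_disjoint by blast

lemma smd_arc_not_same_part: "(u, v) \<in> A \<Longrightarrow> \<not> same_part P u v"
  unfolding same_part_def using smd_independent by blast

lemma smd_arc_or_back:
  "u \<in> V \<Longrightarrow> v \<in> V \<Longrightarrow> \<not> same_part P u v \<Longrightarrow> (u, v) \<in> A \<or> (v, u) \<in> A"
  unfolding same_part_def using smd_union smd_semicomplete by blast

lemma chordless_backward_arc:
  assumes "dpath A xs" "chordless A xs" "Suc i < j" "j < length xs"
    and "\<not> same_part P (xs ! i) (xs ! j)"
  shows "(xs ! j, xs ! i) \<in> A"
proof -
  have "set xs \<subseteq> V"
    using dpath_set_subset[OF smd_arcs_in_V assms(1)] assms(3,4) by simp
  then have "xs ! i \<in> V" "xs ! j \<in> V"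
    using assms(3,4) by auto
  then show ?thesis
    using smd_arc_or_back assms(2-5) unfolding chordless_def by blast
qed

(* If both ends of a chordless path lie in one part and the interior has at
   least two vertices, the first interior vertex and the last one lie in other
   parts, so backward arcs y -> hd m and last m -> x close a path from y to x. *)
lemma chordless_swap_ends:
  assumes p: "dpath A (x # m @ [y])" and c: "chordless A (x # m @ [y])"
    and m: "2 \<le> length m" and xy: "same_part P x y"
  shows "dpath A (y # m @ [x])"
proof -
  let ?xs = "x # m @ [y]"
  have "m \<noteq> []" using m by auto
  have nth_first: "?xs ! 1 = hd m"
    using \<open>m \<noteq> []\<close> by (simp add: hd_conv_nth nth_append)
  have nth_last: "?xs ! length m = last m"
    using \<open>m \<noteq> []\<close> by (simp add: last_conv_nth nth_append nth_Cons')
  have nth_end: "?xs ! Suc (length m) = y"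
    by (simp add: nth_append)
  have "(x, hd m) \<in> A" "(last m, y) \<in> A"
    using p \<open>m \<noteq> []\<close> by (auto simp: dpath_iff_successively successively_append_iff successively_Cons)
  then have "\<not> same_part P x (hd m)" "\<not> same_part P (last m) y"
    by (simp_all add: smd_arc_not_same_part)
  then have parts: "\<not> same_part P (?xs ! 1) (?xs ! Suc (length m))"
    "\<not> same_part P (?xs ! 0) (?xs ! length m)"
    unfolding nth_first nth_last nth_end nth_Cons_0
    using xy smd_same_part_trans[of x y "hd m"] same_part_sym[of P "hd m" y]
      smd_same_part_trans[of "last m" x y] same_part_sym[of P x "last m"] by blast+
  have "(?xs ! Suc (length m), ?xs ! 1) \<in> A"
    by (rule chordless_backward_arc[OF p c _ _ parts(1)]) (use m in simp_all)
  moreover have "(?xs ! length m, ?xs ! 0) \<in> A"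
    by (rule chordless_backward_arc[OF p c _ _ parts(2)]) (use m in simp_all)
  ultimately have "(y, hd m) \<in> A" "(last m, x) \<in> A"
    unfolding nth_first nth_last nth_end nth_Cons_0 by simp_all
  then show ?thesis
    by (rule dpath_swap_ends[OF p \<open>m \<noteq> []\<close>])
qed

(* On a long chordless path whose ends share a part, v2 -> v3 forces one of
   v2, v3 out of that part; backward arcs give the detour y -> w -> x. *)
lemma chordless_detour:
  assumes p: "dpath A xs" and c: "chordless A xs" and len: "6 \<le> length xs"
    and xy: "same_part P (hd xs) (last xs)"
  obtains w where "dpath A [last xs, w, hd xs]"
proof -
  define n where "n = length xs - 1"
  have "xs \<noteq> []" using len by auto
  then have ends: "xs ! 0 = hd xs" "xs ! n = last xs" "length xs = Suc n"
    unfolding n_def by (auto simp: hd_conv_nth last_conv_nth)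
  have "(xs ! 2, xs ! 3) \<in> A"
    using p len unfolding dpath_def by (auto dest!: spec[of _ 2])
  then have "\<not> same_part P (xs ! 2) (xs ! 3)"
    by (rule smd_arc_not_same_part)
  then have "\<not> same_part P (hd xs) (xs ! 2) \<or> \<not> same_part P (hd xs) (xs ! 3)"
    using smd_same_part_trans[of "xs ! 2" "hd xs" "xs ! 3"] same_part_sym[of P "hd xs" "xs ! 2"]
    by blast
  then obtain i where i: "i = 2 \<or> i = 3" "\<not> same_part P (xs ! 0) (xs ! i)"
    using ends by auto
  then have "\<not> same_part P (xs ! i) (xs ! n)"
    using xy ends smd_same_part_trans[of "xs ! 0" "xs ! n" "xs ! i"]
      same_part_sym[of P "xs ! i" "xs ! n"] by auto
  then have "(xs ! n, xs ! i) \<in> A" "(xs ! i, xs ! 0) \<in> A"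
    using chordless_backward_arc[OF p c, of i n] chordless_backward_arc[OF p c, of 0 i] i ends len
    by auto
  moreover have "distinct [xs ! n, xs ! i, xs ! 0]"
  proof -
    have "distinct xs" using p by (simp add: dpath_def)
    then show ?thesis
      using i(1) ends(3) len by (elim disjE) (simp_all add: nth_eq_iff_index_eq)
  qed
  ultimately have "dpath A [last xs, xs ! i, hd xs]"
    using ends by (simp add: dpath_iff_successively)
  then show thesis by (rule that)
qed

lemma chordless_return_path:
  assumes p: "dpath_from_to A x y xs" and c: "chordless A xs" and len: "4 \<le> length xs"
  obtains ys where "dpath_from_to A y x ys" "2 \<le> length ys" "length ys \<le> 5"
proof -
  have "2 \<le> length xs" using len by simp
  then obtain m where xs: "xs = x # m @ [y]"
    using dpath_from_to_ends[OF p] by blast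
  have "dpath A xs" "x \<noteq> y" "m \<noteq> []"
    using p xs len by (auto simp: dpath_from_to_def dpath_def)
  consider (distinct_parts) "\<not> same_part P x y" | (short) "same_part P x y" "length xs \<le> 5"
    | (long) "same_part P x y" "6 \<le> length xs"
    by linarith
  then show thesis
  proof cases
    case distinct_parts
    then have "(y, x) \<in> A"
      using chordless_backward_arc[OF \<open>dpath A xs\<close> c, of 0 "Suc (length m)"] xs len
        \<open>m \<noteq> []\<close> by simp
    then show ?thesis
      using that[of "[y, x]"] \<open>x \<noteq> y\<close> by (simp add: dpath_from_to_def dpath_iff_successively)
  next
    case short
    then have "dpath A (y # m @ [x])"
      using chordless_swap_ends \<open>dpath A xs\<close> c len xs by simp
    then show ?thesis
      using that[of "y # m @ [x]"] short xs by (simp add: dpath_from_to_def)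
  next
    case long
    then obtain w where "dpath A [y, w, x]"
      using chordless_detour \<open>dpath A xs\<close> c xs by fastforce
    then show ?thesis
      using that[of "[y, w, x]"] by (simp add: dpath_from_to_def)
  qed
qed

end

theorem mainTheorem1:
  fixes V :: "'a set" and A :: "('a \<times> 'a) set" and P :: "'a set set"
    and r :: nat and col :: "'a \<Rightarrow> 'a \<Rightarrow> 'c" and x y :: 'a and k :: nat
  assumes "r \<ge> 3"
    and "semicomplete_multipartite V A P r"
    and "x \<in> V" and "y \<in> V" and "x \<noteq> y"
    and "k \<ge> 4"
    and "\<exists>xs. dpath_from_to A x y xs \<and> card (path_colors col xs) = k"
    and "\<not> (\<exists>ys. dpath_from_to A y x ys \<and> 1 \<le> card (path_colors col ys)
                  \<and> card (path_colors col ys) \<le> 4)"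
  shows "ddist A x y \<le> 2"
proof (rule ccontr)
  assume far: "\<not> ddist A x y \<le> 2"
  obtain xs0 where "dpath_from_to A x y xs0"
    using assms(7) by blast
  then obtain xs where xs: "dpath_from_to A x y xs" "length xs = Suc (ddist A x y)"
    "chordless A xs"
    by (rule shortest_dpath)
  have "4 \<le> length xs"
    using xs(2) far by simp
  then obtain ys where ys: "dpath_from_to A y x ys" "2 \<le> length ys" "length ys \<le> 5"
    by (rule chordless_return_path[OF assms(2) xs(1,3)])
  then have "1 \<le> card (path_colors col ys)" "card (path_colors col ys) \<le> 4"
    using card_path_colors_bounds[OF ys(2), of col] by auto
  with ys(1) assms(8) show False
    by blast
qed

end
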